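(* $\left\|\begin{bmatrix}0&0&0&1\\0&1&1&1\\0&1&0&0\\1&1&0&0\end{bmatrix}\right\|_\bullet>\left\|\begin{bmatrix}1&1&0&0\\0&1&1&0\\0&0&1&1\\0&0&0&1\end{bmatrix}\right\|_\bullet$.
   Context: Fix $\mathbb F\in\{\mathbb R,\mathbb C\}$. For an $m\times n$ matrix $A$, the Schur norm is $\|A\|_\bullet=\sup\{\|A\bullet X\|: X\in M_{m,n}(\mathbb F),\ \|X\|\le1\}$, where $A\bullet X=[a_{ij}x_{ij}]$ is the entrywise product and $\|\cdot\|$ is the operator norm $\ell^2_n\to\ell^2_m$. *)

theory Defs
  imports Complex_Main
begin

text \<open>Matrices are represented as functions nat => nat => 'a, with the size
(m rows, n columns) passed explicitly; only entries with i < m, j < n matter.\<close>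

definition vec_norm2 :: "nat \<Rightarrow> (nat \<Rightarrow> 'a::real_normed_field) \<Rightarrow> real" where
  "vec_norm2 n v = sqrt (\<Sum>j<n. (norm (v j))^2)"

definition op_norm :: "nat \<Rightarrow> nat \<Rightarrow> (nat \<Rightarrow> nat \<Rightarrow> 'a::real_normed_field) \<Rightarrow> real" where
  "op_norm m n X = Sup {vec_norm2 m (\<lambda>i. \<Sum>j<n. X i j * v j) | v. vec_norm2 n v \<le> 1}"

definition schur_norm :: "nat \<Rightarrow> nat \<Rightarrow> (nat \<Rightarrow> nat \<Rightarrow> 'a::real_normed_field) \<Rightarrow> real" where
  "schur_norm m n A = Sup {op_norm m n (\<lambda>i j. A i j * X i j) | X. op_norm m n X \<le> 1}"

definition mat_of_rows :: "'a list list \<Rightarrow> nat \<Rightarrow> nat \<Rightarrow> 'a" where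
  "mat_of_rows rs i j = rs ! i ! j"

end

theory Submission
  imports Defs "HOL-Analysis.Analysis"
begin

text \<open>Both Schur norms are squeezed by the explicit constant 5/4.
For the upper bound we use the easy half of the Grothendieck--Haagerup criterion:
if \<open>a\<^sub>i\<^sub>j = \<Sum>\<^sub>k r\<^sub>i\<^sub>k c\<^sub>j\<^sub>k\<close> with all rows of \<open>r\<close> of squared length \<open>\<le> P\<close> and all rows of
\<open>c\<close> of squared length \<open>\<le> Q\<close>, then \<open>\<parallel>a\<parallel>\<^sub>\<bullet> \<le> \<surd>(P Q)\<close>, because \<open>a \<bullet> X\<close> acts as
\<open>\<Sum>\<^sub>k diag(r\<^sub>k) X diag(c\<^sub>k)\<close> and Cauchy--Schwarz applies twice. A rational
factorisation of the second matrix gives \<open>\<surd>(582 \<cdot> 25/9312) = 5/4\<close>.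
For the lower bound we exhibit a rational orthogonal matrix \<open>X\<close> (hence \<open>\<parallel>X\<parallel> \<le> 1\<close>)
and a vector \<open>v\<close> with \<open>\<parallel>(a \<bullet> X) v\<parallel> > 5/4 \<parallel>v\<parallel>\<close> for the first matrix.\<close>

lemma vec_norm2_nonneg: "vec_norm2 n v \<ge> 0"
  unfolding vec_norm2_def by (intro real_sqrt_ge_zero sum_nonneg) auto

lemma vec_norm2_power2: "(vec_norm2 n v)^2 = (\<Sum>j<n. (norm (v j))^2)"
  unfolding vec_norm2_def by (intro real_sqrt_pow2 sum_nonneg) auto

lemma vec_norm2_zero: "vec_norm2 n (\<lambda>j. 0::'a::real_normed_field) = 0"
  unfolding vec_norm2_def by simp

lemma vec_norm2_scale: "vec_norm2 n (\<lambda>j. c * v j) = norm c * vec_norm2 n v"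
proof -
  have "(\<Sum>j<n. (norm (c * v j))^2) = (norm c)^2 * (\<Sum>j<n. (norm (v j))^2)"
    by (simp add: sum_distrib_left norm_mult power_mult_distrib)
  then show ?thesis unfolding vec_norm2_def by (simp add: real_sqrt_mult)
qed

lemma vec_norm2_le_by_squares:
  assumes "(\<Sum>i<m. (norm (u i))^2) \<le> c^2 * (\<Sum>j<n. (norm (v j))^2)" and "c \<ge> 0"
  shows "vec_norm2 m u \<le> c * vec_norm2 n v"
proof -
  have "vec_norm2 m u \<le> sqrt (c^2 * (\<Sum>j<n. (norm (v j))^2))"
    unfolding vec_norm2_def using assms(1) by (rule real_sqrt_le_mono)
  also have "\<dots> = c * vec_norm2 n v"
    using assms(2) unfolding vec_norm2_def by (simp add: real_sqrt_mult)
  finally show ?thesis .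
qed

lemma vec_norm2_of_real:
  "vec_norm2 n (\<lambda>j. of_real (v j) :: 'a::real_normed_field) = sqrt (\<Sum>j<n. (v j)^2)"
  unfolding vec_norm2_def by simp

lemma norm_sum_mult_power2_le:
  fixes x y :: "'b \<Rightarrow> 'a::real_normed_field"
  shows "(norm (\<Sum>k\<in>I. x k * y k))^2 \<le> (\<Sum>k\<in>I. (norm (x k))^2) * (\<Sum>k\<in>I. (norm (y k))^2)"
proof -
  have "norm (\<Sum>k\<in>I. x k * y k) \<le> (\<Sum>k\<in>I. norm (x k) * norm (y k))"
    by (metis (no_types, lifting) norm_mult norm_sum sum.cong)
  then have "(norm (\<Sum>k\<in>I. x k * y k))^2 \<le> (\<Sum>k\<in>I. norm (x k) * norm (y k))^2"
    by (intro power_mono) auto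
  also have "\<dots> \<le> (\<Sum>k\<in>I. (norm (x k))^2) * (\<Sum>k\<in>I. (norm (y k))^2)"
    by (rule Cauchy_Schwarz_ineq_sum)
  finally show ?thesis .
qed

lemma vec_norm2_mat_apply_le_frobenius:
  fixes X :: "nat \<Rightarrow> nat \<Rightarrow> 'a::real_normed_field"
  shows "vec_norm2 m (\<lambda>i. \<Sum>j<n. X i j * v j)
           \<le> sqrt (\<Sum>i<m. \<Sum>j<n. (norm (X i j))^2) * vec_norm2 n v"
proof (rule vec_norm2_le_by_squares)
  have "(\<Sum>i<m. (norm (\<Sum>j<n. X i j * v j))^2)
          \<le> (\<Sum>i<m. (\<Sum>j<n. (norm (X i j))^2) * (\<Sum>j<n. (norm (v j))^2))"
    by (intro sum_mono norm_sum_mult_power2_le)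
  then show "(\<Sum>i<m. (norm (\<Sum>j<n. X i j * v j))^2)
               \<le> (sqrt (\<Sum>i<m. \<Sum>j<n. (norm (X i j))^2))^2 * (\<Sum>j<n. (norm (v j))^2)"
    by (simp add: sum_distrib_right sum_nonneg)
qed (intro real_sqrt_ge_zero sum_nonneg, auto)

lemma op_norm_bdd_above:
  fixes X :: "nat \<Rightarrow> nat \<Rightarrow> 'a::real_normed_field"
  shows "bdd_above {vec_norm2 m (\<lambda>i. \<Sum>j<n. X i j * v j) | v. vec_norm2 n v \<le> 1}"
proof (rule bdd_aboveI, clarify)
  let ?F = "sqrt (\<Sum>i<m. \<Sum>j<n. (norm (X i j))^2)"
  fix v :: "nat \<Rightarrow> 'a" assume "vec_norm2 n v \<le> 1"
  then have "?F * vec_norm2 n v \<le> ?F"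
    by (intro mult_left_le real_sqrt_ge_zero sum_nonneg) auto
  then show "vec_norm2 m (\<lambda>i. \<Sum>j<n. X i j * v j) \<le> ?F"
    using vec_norm2_mat_apply_le_frobenius[where m=m and n=n and X=X and v=v] by linarith
qed

lemma op_norm_ge:
  fixes X :: "nat \<Rightarrow> nat \<Rightarrow> 'a::real_normed_field"
  assumes "vec_norm2 n v \<le> 1"
  shows "vec_norm2 m (\<lambda>i. \<Sum>j<n. X i j * v j) \<le> op_norm m n X"
  unfolding op_norm_def by (rule cSup_upper) (use assms op_norm_bdd_above in auto)

lemma op_norm_le:
  fixes X :: "nat \<Rightarrow> nat \<Rightarrow> 'a::real_normed_field"
  assumes "\<And>v. vec_norm2 m (\<lambda>i. \<Sum>j<n. X i j * v j) \<le> c * vec_norm2 n v" and "c \<ge> 0"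
  shows "op_norm m n X \<le> c"
  unfolding op_norm_def
proof (rule cSup_least)
  have "vec_norm2 n (\<lambda>j. 0::'a) \<le> 1" by (simp add: vec_norm2_zero)
  then show "{vec_norm2 m (\<lambda>i. \<Sum>j<n. X i j * v j) | v. vec_norm2 n v \<le> 1} \<noteq> {}"
    by blast
next
  fix x assume "x \<in> {vec_norm2 m (\<lambda>i. \<Sum>j<n. X i j * v j) | v. vec_norm2 n v \<le> 1}"
  then obtain v where "vec_norm2 n v \<le> 1" and "x = vec_norm2 m (\<lambda>i. \<Sum>j<n. X i j * v j)"
    by auto
  with assms(1)[of v] assms(2) show "x \<le> c"
    by (smt (verit) mult_left_le)
qed

lemma op_norm_zero_le_1: "op_norm m n (\<lambda>i j. 0 :: 'a::real_normed_field) \<le> 1"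
  by (rule op_norm_le) (simp_all add: vec_norm2_zero vec_norm2_nonneg)

lemma vec_norm2_mat_apply_le_op_norm:
  fixes X :: "nat \<Rightarrow> nat \<Rightarrow> 'a::real_normed_field"
  shows "vec_norm2 m (\<lambda>i. \<Sum>j<n. X i j * v j) \<le> op_norm m n X * vec_norm2 n v"
proof (cases "vec_norm2 n v = 0")
  case True
  then have "(\<Sum>j<n. (norm (v j))^2) = 0"
    using vec_norm2_power2[of n v] by simp
  then have "\<forall>j\<in>{..<n}. (norm (v j))^2 = 0"
    by (subst (asm) sum_nonneg_eq_0_iff) auto
  then have "(\<lambda>i. \<Sum>j<n. X i j * v j) = (\<lambda>i. 0)" by simp
  then show ?thesis using True by (simp add: vec_norm2_zero)
next
  case False
  define N where "N = vec_norm2 n v"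
  have "N > 0" using False vec_norm2_nonneg[of n v] N_def by auto
  then have norm_inv_N: "norm (of_real (1/N) :: 'a) = 1/N" by (simp add: norm_divide)
  have "vec_norm2 n (\<lambda>j. of_real (1/N) * v j) \<le> 1"
    unfolding vec_norm2_scale norm_inv_N using \<open>N > 0\<close> N_def by simp
  then have "vec_norm2 m (\<lambda>i. \<Sum>j<n. X i j * (of_real (1/N) * v j)) \<le> op_norm m n X"
    by (rule op_norm_ge)
  moreover have "(\<lambda>i. \<Sum>j<n. X i j * (of_real (1/N) * v j))
                   = (\<lambda>i. of_real (1/N) * (\<Sum>j<n. X i j * v j))"
    by (simp add: sum_distrib_left mult_ac)
  ultimately have "(1/N) * vec_norm2 m (\<lambda>i. \<Sum>j<n. X i j * v j) \<le> op_norm m n X"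
    by (simp only: vec_norm2_scale norm_inv_N)
  then show ?thesis using \<open>N > 0\<close> N_def by (simp add: field_simps)
qed

lemma op_norm_gt:
  fixes X :: "nat \<Rightarrow> nat \<Rightarrow> 'a::real_normed_field"
  assumes "vec_norm2 m (\<lambda>i. \<Sum>j<n. X i j * v j) > c * vec_norm2 n v"
  shows "op_norm m n X > c"
proof -
  have "c * vec_norm2 n v < op_norm m n X * vec_norm2 n v"
    using assms vec_norm2_mat_apply_le_op_norm[where m=m and n=n and X=X and v=v] by linarith
  then show ?thesis
    using vec_norm2_nonneg[of n v] by (smt (verit) mult_right_mono)
qed

lemma op_norm_orthogonal_le_1:
  fixes x :: "nat \<Rightarrow> nat \<Rightarrow> real"
  assumes orth: "\<And>j l. j<n \<Longrightarrow> l<n \<Longrightarrow> (\<Sum>i<n. x i j * x i l) = (if j = l then 1 else 0)"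
  shows "op_norm n n (\<lambda>i j. of_real (x i j) :: 'a::{real_normed_field,real_inner}) \<le> 1"
proof (rule op_norm_le)
  fix v :: "nat \<Rightarrow> 'a"
  have "(\<Sum>i<n. (norm (\<Sum>j<n. of_real (x i j) * v j))^2)
      = (\<Sum>i<n. inner (\<Sum>j<n. x i j *\<^sub>R v j) (\<Sum>l<n. x i l *\<^sub>R v l))"
    by (simp add: power2_norm_eq_inner scaleR_conv_of_real)
  also have "\<dots> = (\<Sum>i<n. \<Sum>j<n. \<Sum>l<n. (x i j * x i l) * inner (v j) (v l))"
    by (simp only: inner_sum_left) (simp add: inner_sum_right sum_distrib_left mult_ac)
  also have "\<dots> = (\<Sum>j<n. \<Sum>i<n. \<Sum>l<n. (x i j * x i l) * inner (v j) (v l))"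
    by (rule sum.swap)
  also have "\<dots> = (\<Sum>j<n. \<Sum>l<n. \<Sum>i<n. (x i j * x i l) * inner (v j) (v l))"
    by (rule sum.cong[OF refl], rule sum.swap)
  also have "\<dots> = (\<Sum>j<n. \<Sum>l<n. (\<Sum>i<n. x i j * x i l) * inner (v j) (v l))"
    by (simp only: sum_distrib_right)
  also have "\<dots> = (\<Sum>j<n. \<Sum>l<n. if j = l then inner (v j) (v l) else 0)"
    by (intro sum.cong refl) (simp add: orth)
  also have "\<dots> = (\<Sum>j<n. (norm (v j))^2)"
    by (simp add: power2_norm_eq_inner)
  finally show "vec_norm2 n (\<lambda>i. \<Sum>j<n. of_real (x i j) * v j) \<le> 1 * vec_norm2 n v"
    by (intro vec_norm2_le_by_squares) auto
qed simp

lemma op_norm_schur_product_le_factorization: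
  fixes A X r c :: "nat \<Rightarrow> nat \<Rightarrow> 'a::real_normed_field"
  assumes A: "\<And>i j. i<m \<Longrightarrow> j<n \<Longrightarrow> A i j = (\<Sum>k<K. r i k * c j k)"
    and P: "\<And>i. i<m \<Longrightarrow> (\<Sum>k<K. (norm (r i k))^2) \<le> P"
    and Q: "\<And>j. j<n \<Longrightarrow> (\<Sum>k<K. (norm (c j k))^2) \<le> Q"
    and "P \<ge> 0" and "Q \<ge> 0" and X: "op_norm m n X \<le> 1"
  shows "op_norm m n (\<lambda>i j. A i j * X i j) \<le> sqrt (P * Q)"
proof (rule op_norm_le)
  fix v :: "nat \<Rightarrow> 'a"
  let ?cv = "\<lambda>k j. c j k * v j"
  define u where "u k i = (\<Sum>j<n. X i j * ?cv k j)" for k i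
  have expand: "(\<Sum>j<n. A i j * X i j * v j) = (\<Sum>k<K. r i k * u k i)" if "i < m" for i
  proof -
    have "(\<Sum>j<n. A i j * X i j * v j) = (\<Sum>j<n. \<Sum>k<K. r i k * (X i j * ?cv k j))"
      by (rule sum.cong) (auto simp: A that sum_distrib_left sum_distrib_right mult_ac)
    also have "\<dots> = (\<Sum>k<K. r i k * u k i)"
      by (subst sum.swap) (simp add: u_def sum_distrib_left)
    finally show ?thesis .
  qed
  have u_le: "(vec_norm2 m (u k))^2 \<le> (vec_norm2 n (?cv k))^2" for k
  proof -
    have "vec_norm2 m (u k) \<le> op_norm m n X * vec_norm2 n (?cv k)"
      unfolding u_def by (rule vec_norm2_mat_apply_le_op_norm)
    also have "\<dots> \<le> vec_norm2 n (?cv k)"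
      using mult_right_mono[OF X vec_norm2_nonneg] by simp
    finally show ?thesis using vec_norm2_nonneg by (intro power_mono) auto
  qed
  have "(\<Sum>i<m. (norm (\<Sum>j<n. A i j * X i j * v j))^2)
          \<le> (\<Sum>i<m. P * (\<Sum>k<K. (norm (u k i))^2))"
  proof (rule sum_mono)
    fix i assume "i \<in> {..<m}"
    then have "i < m" by simp
    have "(norm (\<Sum>k<K. r i k * u k i))^2
            \<le> (\<Sum>k<K. (norm (r i k))^2) * (\<Sum>k<K. (norm (u k i))^2)"
      by (rule norm_sum_mult_power2_le)
    also have "\<dots> \<le> P * (\<Sum>k<K. (norm (u k i))^2)"
      using P[OF \<open>i < m\<close>] by (intro mult_right_mono sum_nonneg) auto
    finally show "(norm (\<Sum>j<n. A i j * X i j * v j))^2 \<le> P * (\<Sum>k<K. (norm (u k i))^2)"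
      using expand[OF \<open>i < m\<close>] by simp
  qed
  also have "\<dots> = P * (\<Sum>k<K. (vec_norm2 m (u k))^2)"
    by (simp add: vec_norm2_power2 sum_distrib_left sum.swap[of _ "{..<m}"])
  also have "\<dots> \<le> P * (\<Sum>k<K. (vec_norm2 n (?cv k))^2)"
    using \<open>P \<ge> 0\<close> u_le by (intro mult_left_mono sum_mono) auto
  also have "\<dots> = P * (\<Sum>j<n. (norm (v j))^2 * (\<Sum>k<K. (norm (c j k))^2))"
    by (simp add: vec_norm2_power2 norm_mult power_mult_distrib sum_distrib_left mult_ac
        sum.swap[of _ "{..<K}"])
  also have "\<dots> \<le> P * (\<Sum>j<n. (norm (v j))^2 * Q)"
    using Q \<open>P \<ge> 0\<close> by (intro mult_left_mono sum_mono) auto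
  also have "\<dots> = (sqrt (P * Q))^2 * (\<Sum>j<n. (norm (v j))^2)"
    using \<open>P \<ge> 0\<close> \<open>Q \<ge> 0\<close> by (simp add: sum_distrib_left sum_distrib_right mult_ac)
  finally show "vec_norm2 m (\<lambda>i. \<Sum>j<n. A i j * X i j * v j) \<le> sqrt (P * Q) * vec_norm2 n v"
    by (rule vec_norm2_le_by_squares) (use \<open>P \<ge> 0\<close> \<open>Q \<ge> 0\<close> in simp)
qed (use \<open>P \<ge> 0\<close> \<open>Q \<ge> 0\<close> in simp)

lemma schur_norm_bdd_above:
  fixes A :: "nat \<Rightarrow> nat \<Rightarrow> 'a::real_normed_field"
  shows "bdd_above {op_norm m n (\<lambda>i j. A i j * X i j) | X. op_norm m n X \<le> 1}"
proof -
  define F where "F = (\<Sum>i<m. \<Sum>k<n. (norm (A i k))^2)"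
  have "op_norm m n (\<lambda>i j. A i j * X i j) \<le> sqrt (F * 1)" if "op_norm m n X \<le> 1" for X
  \<comment> \<open>the trivial factorisation \<open>A = A \<cdot> I\<close>\<close>
  proof (rule op_norm_schur_product_le_factorization[where r=A and c="\<lambda>j k. if j = k then 1 else 0"])
    show "A i j = (\<Sum>k<n. A i k * (if j = k then 1 else 0))" if "j < n" for i j
      using that by (simp add: if_distrib cong: if_cong)
    show "(\<Sum>k<n. (norm (A i k))^2) \<le> F" if "i < m" for i
      unfolding F_def using that
      by (intro member_le_sum[where f="\<lambda>i. \<Sum>k<n. (norm (A i k))^2"]) (auto intro: sum_nonneg)
    show "(\<Sum>k<n. (norm (if j = k then 1 else 0::'a))^2) \<le> 1" for j
      by (simp add: if_distrib[of "\<lambda>x. (norm x)^2"] cong: if_cong)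
    show "F \<ge> 0" unfolding F_def by (intro sum_nonneg) auto
  qed (use that in auto)
  then show ?thesis by (intro bdd_aboveI[where M="sqrt (F * 1)"]) auto
qed

lemma op_norm_schur_product_le_schur_norm:
  fixes A X :: "nat \<Rightarrow> nat \<Rightarrow> 'a::real_normed_field"
  assumes "op_norm m n X \<le> 1"
  shows "op_norm m n (\<lambda>i j. A i j * X i j) \<le> schur_norm m n A"
  unfolding schur_norm_def by (rule cSup_upper) (use assms schur_norm_bdd_above in auto)

lemma schur_norm_le_factorization:
  fixes A r c :: "nat \<Rightarrow> nat \<Rightarrow> 'a::real_normed_field"
  assumes "\<And>i j. i<m \<Longrightarrow> j<n \<Longrightarrow> A i j = (\<Sum>k<K. r i k * c j k)"
    and "\<And>i. i<m \<Longrightarrow> (\<Sum>k<K. (norm (r i k))^2) \<le> P"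
    and "\<And>j. j<n \<Longrightarrow> (\<Sum>k<K. (norm (c j k))^2) \<le> Q"
    and "P \<ge> 0" and "Q \<ge> 0"
  shows "schur_norm m n A \<le> sqrt (P * Q)"
  unfolding schur_norm_def
proof (rule cSup_least)
  show "{op_norm m n (\<lambda>i j. A i j * X i j) | X. op_norm m n X \<le> 1} \<noteq> {}"
    using op_norm_zero_le_1[where 'a='a and m=m and n=n] by blast
qed (use op_norm_schur_product_le_factorization[OF assms] in auto)

lemma less_4_cases: "(i::nat) < 4 \<longleftrightarrow> i = 0 \<or> i = 1 \<or> i = 2 \<or> i = 3"
  by auto

lemma sum_lessThan_4: "(\<Sum>k<4. f k) = f 0 + f 1 + f 2 + f (3::nat)"
  by (simp add: eval_nat_numeral)

abbreviation schur_example_A :: "nat \<Rightarrow> nat \<Rightarrow> 'a::{zero,one}" where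
  "schur_example_A \<equiv> mat_of_rows [[0,0,0,1],[0,1,1,1],[0,1,0,0],[1,1,0,0]]"

abbreviation schur_example_B :: "nat \<Rightarrow> nat \<Rightarrow> 'a::{zero,one}" where
  "schur_example_B \<equiv> mat_of_rows [[1,1,0,0],[0,1,1,0],[0,0,1,1],[0,0,0,1]]"

text \<open>The witnesses below are rational approximations of numerically optimal ones;
the columns of \<open>lower_witness\<close> have integer length 1469.\<close>

definition lower_witness :: "nat \<Rightarrow> nat \<Rightarrow> real" where
  "lower_witness i j = mat_of_rows
     [[181,-200,740,-1240],[-200,781,-980,-740],[-740,980,781,200],[1240,740,200,181]] i j / 1469"

definition lower_test_vector :: "nat \<Rightarrow> real" where
  "lower_test_vector j = [5,10,-5,-7] ! j"

definition upper_left_factor :: "nat \<Rightarrow> nat \<Rightarrow> real" where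
  "upper_left_factor = mat_of_rows [[21,-10,-5,-1],[14,0,19,-5],[7,19,8,10],[7,18,-12,-7]]"

definition upper_right_factor :: "nat \<Rightarrow> nat \<Rightarrow> real" where
  "upper_right_factor j k = mat_of_rows
     [[7807,9640,4555,4186],[-3857,-2968,4956,9793],[-4347,3409,8764,-2471],[5341,-3836,2275,2331]]
     k j / 218911"

lemma lower_witness_orthogonal:
  "j < 4 \<Longrightarrow> l < 4 \<Longrightarrow> (\<Sum>i<4. lower_witness i j * lower_witness i l) = (if j = l then 1 else 0)"
  unfolding less_4_cases by (auto simp: sum_lessThan_4 lower_witness_def mat_of_rows_def)

lemma schur_norm_example_A_gt:
  "schur_norm 4 4 (schur_example_A :: nat \<Rightarrow> nat \<Rightarrow> 'a::{real_normed_field,real_inner}) > 5/4"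
proof -
  let ?X = "\<lambda>i j. of_real (lower_witness i j) :: 'a"
  let ?v = "\<lambda>j. of_real (lower_test_vector j) :: 'a"
  have row: "(\<Sum>j<4. schur_example_A i j * ?X i j * ?v j)
               = of_real (\<Sum>j<4. schur_example_A i j * lower_witness i j * lower_test_vector j)"
    if "i < 4" for i
    using that unfolding less_4_cases by (auto simp: sum_lessThan_4 mat_of_rows_def)
  have "vec_norm2 4 (\<lambda>i. \<Sum>j<4. schur_example_A i j * ?X i j * ?v j)
          = sqrt (\<Sum>i<4. (\<Sum>j<4. schur_example_A i j * lower_witness i j * lower_test_vector j)^2)"
    unfolding vec_norm2_def by (intro arg_cong[where f=sqrt] sum.cong refl) (simp only: lessThan_iff row norm_of_real power2_abs)
  also have "\<dots> = sqrt (676394500 / 2157961)"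
    by (simp add: sum_lessThan_4 lower_witness_def lower_test_vector_def mat_of_rows_def
        power2_eq_square)
  also have "\<dots> > 5/4 * sqrt 199"
    by (rule power2_less_imp_less) (simp_all add: power_divide power_mult_distrib)
  also have "sqrt 199 = vec_norm2 4 ?v"
    by (simp add: vec_norm2_of_real sum_lessThan_4 lower_test_vector_def)
  finally have "op_norm 4 4 (\<lambda>i j. schur_example_A i j * ?X i j) > 5/4"
    by (intro op_norm_gt) simp
  also have "op_norm 4 4 (\<lambda>i j. schur_example_A i j * ?X i j) \<le> schur_norm 4 4 (schur_example_A :: nat \<Rightarrow> nat \<Rightarrow> 'a)"
    by (intro op_norm_schur_product_le_schur_norm op_norm_orthogonal_le_1 lower_witness_orthogonal)
  finally show ?thesis .
qed

lemma schur_norm_example_B_le: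
  "schur_norm 4 4 (schur_example_B :: nat \<Rightarrow> nat \<Rightarrow> 'a::real_normed_field) \<le> 5/4"
proof -
  have "schur_norm 4 4 (schur_example_B :: nat \<Rightarrow> nat \<Rightarrow> 'a) \<le> sqrt (582 * (25/9312))"
  proof (rule schur_norm_le_factorization[where K=4
        and r="\<lambda>i k. of_real (upper_left_factor i k)" and c="\<lambda>j k. of_real (upper_right_factor j k)"])
    show "schur_example_B i j
            = (\<Sum>k<4. of_real (upper_left_factor i k) * (of_real (upper_right_factor j k) :: 'a))"
      if "i < 4" "j < 4" for i j
      using that unfolding less_4_cases
      by (auto simp: sum_lessThan_4 mat_of_rows_def upper_left_factor_def upper_right_factor_def)
    show "(\<Sum>k<4. (norm (of_real (upper_left_factor i k) :: 'a))^2) \<le> 582" if "i < 4" for i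
      using that unfolding less_4_cases
      by (auto simp: sum_lessThan_4 mat_of_rows_def upper_left_factor_def)
    show "(\<Sum>k<4. (norm (of_real (upper_right_factor j k) :: 'a))^2) \<le> 25/9312" if "j < 4" for j
      using that unfolding less_4_cases
      by (auto simp: sum_lessThan_4 mat_of_rows_def upper_right_factor_def power2_eq_square)
  qed simp_all
  also have "sqrt (582 * (25/9312)) = 5/4"
    by (simp add: real_sqrt_divide)
  finally show ?thesis .
qed

theorem proposition5p7:
  shows "schur_norm 4 4 (mat_of_rows [[0,0,0,1],[0,1,1,1],[0,1,0,0],[1,1,0,0]] :: nat \<Rightarrow> nat \<Rightarrow> real)
           > schur_norm 4 4 (mat_of_rows [[1,1,0,0],[0,1,1,0],[0,0,1,1],[0,0,0,1]] :: nat \<Rightarrow> nat \<Rightarrow> real)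
       \<and> schur_norm 4 4 (mat_of_rows [[0,0,0,1],[0,1,1,1],[0,1,0,0],[1,1,0,0]] :: nat \<Rightarrow> nat \<Rightarrow> complex)
           > schur_norm 4 4 (mat_of_rows [[1,1,0,0],[0,1,1,0],[0,0,1,1],[0,0,0,1]] :: nat \<Rightarrow> nat \<Rightarrow> complex)"
  using schur_norm_example_A_gt[where 'a=real] schur_norm_example_B_le[where 'a=real]
    schur_norm_example_A_gt[where 'a=complex] schur_norm_example_B_le[where 'a=complex]
  by linarith

end
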